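(* Let $(D,\mathrm{left},\mathrm{right})$ be an interval domain and consider the poset $(\max(D),\le)$, with $\ll$, $\Downarrow$, $\Uparrow$, $\bigvee$, $\bigwedge$ computed in $(\max(D),\le)$. Then: (i) for every $x\in\max(D)$, the set $\Downarrow x$ is $\le$-directed with $\bigvee\Downarrow x=x$; (ii) for all $a,b\in\max(D)$: $a\ll b$ iff for every $\le$-filtered $S\subseteq\max(D)$ having an infimum, $\bigwedge S\le a$ implies $s\le b$ for some $s\in S$; (iii) for every $x\in\max(D)$, the set $\Uparrow x$ is $\le$-filtered with $\bigwedge\Uparrow x=x$. Thus $(\max(D),\le)$ is a bicontinuous poset.
   Context: For a poset $(P,\sqsubseteq)$: directed (resp. filtered) sets are nonempty sets in which any two elements have an upper (resp. lower) bound in the set; $\bigsqcup S$ is the supremum; $x\ll y$ iff for every directed $S\subseteq P$ with a supremum, $y\sqsubseteq\bigsqcup S$ implies $x\sqsubseteq s$ for some $s\in S$; $\Uparrow x=\{a: x\ll a\}$, $\Downarrow x=\{a:a\ll x\}$. $P$ is continuous if there is $B\subseteq P$ such that for each $x$, $B\cap\Downarrow x$ contains a directed set with supremum $x$. A continuous poset is bicontinuous if (1) $x\ll y$ iff for every filtered $S$ having an infimum, $\bigwedge S\sqsubseteq x$ implies $s\sqsubseteq y$ for some $s\in S$; and (2) each $\Uparrow x$ is filtered with infimum $x$. A continuous dcpo is a continuous poset in which every directed set has a supremum. $\max(P)$ is the set of maximal elements, $x\sqcap y$ the infimum of $\{x,y\}$. The Scott topology consists of upper sets $U$ such that $\bigsqcup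 S\in U$ implies $S\cap U\ne\emptyset$ for directed $S$. An interval poset is a poset $D$ with functions $\mathrm{left},\mathrm{right}:D\to\max(D)$ such that (only named infima are assumed to exist): (i) $x=\mathrm{left}(x)\sqcap\mathrm{right}(x)$ for all $x$; (ii) if $\mathrm{right}(x)=\mathrm{left}(y)$ then $\mathrm{left}(x\sqcap y)=\mathrm{left}(x)$ and $\mathrm{right}(x\sqcap y)=\mathrm{right}(y)$; (iii) for $p\in\max(D)$ with $x\sqsubseteq p$: $\mathrm{left}(\mathrm{left}(x)\sqcap p)=\mathrm{left}(x)$, $\mathrm{right}(\mathrm{left}(x)\sqcap p)=p$, $\mathrm{left}(p\sqcap\mathrm{right}(x))=p$, $\mathrm{right}(p\sqcap\mathrm{right}(x))=\mathrm{right}(x)$. On $\max(D)$ define $a\le b$ iff $a=\mathrm{left}(z)$, $b=\mathrm{right}(z)$ for some $z\in D$; this is a partial order. For $p,q\in\max(D)$ let $[p,\cdot]=\mathrm{left}^{-1}(p)$ and $[\cdot,q]=\mathrm{right}^{-1}(q)$, regarded as subposets of $D$. An interval domain is an interval poset $(D,\mathrm{left},\mathrm{right})$ such that $D$ is a continuous dcpo and: (i) if $p\in\Uparrow x\cap\max(D)$ then $\Uparrow(\mathrm{left}(x)\sqcap p)\ne\emptyset$ and $\Uparrow(p\sqcap\mathrm{right}(x))\ne\emptyset$; (ii) for all $x\in D$ the following are equivalent: (a) $\Uparrow x\ne\emptyset$; (b) for all $y\in[\mathrm{left}(x),\cdot]$ with $y\sqsubseteq x$, $y\ll\mathrm{right}(y)$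 in the poset $[\cdot,\mathrm{right}(y)]$; (c) for all $y\in[\cdot,\mathrm{right}(x)]$ with $y\sqsubseteq x$, $y\ll\mathrm{left}(y)$ in the poset $[\mathrm{left}(y),\cdot]$; (iii)(a) for every directed $S\subseteq[p,\cdot]$, $\mathrm{left}(\bigsqcup S)=p$ and $\mathrm{right}(\bigsqcup S)=\mathrm{right}(\bigsqcup T)$ for every directed $T\subseteq[q,\cdot]$ with $\mathrm{right}(T)=\mathrm{right}(S)$ (images); (iii)(b) for every directed $S\subseteq[\cdot,q]$, $\mathrm{right}(\bigsqcup S)=q$ and $\mathrm{left}(\bigsqcup S)=\mathrm{left}(\bigsqcup T)$ for every directed $T\subseteq[\cdot,p]$ with $\mathrm{left}(T)=\mathrm{left}(S)$; (iv) for all $x\in D$, $\{y\in\max(D): x\sqsubseteq y\}$ is compact in the relative Scott topology. *)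

theory Defs
  imports Main
begin

definition poset_on :: "'a set \<Rightarrow> ('a \<Rightarrow> 'a \<Rightarrow> bool) \<Rightarrow> bool" where
  "poset_on P le \<longleftrightarrow>
     (\<forall>x\<in>P. le x x) \<and>
     (\<forall>x\<in>P. \<forall>y\<in>P. le x y \<and> le y x \<longrightarrow> x = y) \<and>
     (\<forall>x\<in>P. \<forall>y\<in>P. \<forall>z\<in>P. le x y \<and> le y z \<longrightarrow> le x z)"

definition directed_in :: "'a set \<Rightarrow> ('a \<Rightarrow> 'a \<Rightarrow> bool) \<Rightarrow> 'a set \<Rightarrow> bool" where
  "directed_in P le S \<longleftrightarrow> S \<subseteq> P \<and> S \<noteq> {} \<and> (\<forall>x\<in>S. \<forall>y\<in>S. \<exists>z\<in>S. le x z \<and> le y z)"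

definition filtered_in :: "'a set \<Rightarrow> ('a \<Rightarrow> 'a \<Rightarrow> bool) \<Rightarrow> 'a set \<Rightarrow> bool" where
  "filtered_in P le S \<longleftrightarrow> S \<subseteq> P \<and> S \<noteq> {} \<and> (\<forall>x\<in>S. \<forall>y\<in>S. \<exists>z\<in>S. le z x \<and> le z y)"

definition is_sup_in :: "'a set \<Rightarrow> ('a \<Rightarrow> 'a \<Rightarrow> bool) \<Rightarrow> 'a set \<Rightarrow> 'a \<Rightarrow> bool" where
  "is_sup_in P le S s \<longleftrightarrow> s \<in> P \<and> (\<forall>x\<in>S. le x s) \<and> (\<forall>u\<in>P. (\<forall>x\<in>S. le x u) \<longrightarrow> le s u)"

definition is_inf_in :: "'a set \<Rightarrow> ('a \<Rightarrow> 'a \<Rightarrow> bool) \<Rightarrow> 'a set \<Rightarrow> 'a \<Rightarrow> bool" where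
  "is_inf_in P le S i \<longleftrightarrow> i \<in> P \<and> (\<forall>x\<in>S. le i x) \<and> (\<forall>u\<in>P. (\<forall>x\<in>S. le u x) \<longrightarrow> le u i)"

definition way_below_in :: "'a set \<Rightarrow> ('a \<Rightarrow> 'a \<Rightarrow> bool) \<Rightarrow> 'a \<Rightarrow> 'a \<Rightarrow> bool" where
  "way_below_in P le x y \<longleftrightarrow>
     (\<forall>S s. directed_in P le S \<and> is_sup_in P le S s \<and> le y s \<longrightarrow> (\<exists>t\<in>S. le x t))"

definition wb_up :: "'a set \<Rightarrow> ('a \<Rightarrow> 'a \<Rightarrow> bool) \<Rightarrow> 'a \<Rightarrow> 'a set" where
  "wb_up P le x = {a\<in>P. way_below_in P le x a}"

definition wb_down :: "'a set \<Rightarrow> ('a \<Rightarrow> 'a \<Rightarrow> bool) \<Rightarrow> 'a \<Rightarrow> 'a set" where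
  "wb_down P le x = {a\<in>P. way_below_in P le a x}"

definition continuous_poset :: "'a set \<Rightarrow> ('a \<Rightarrow> 'a \<Rightarrow> bool) \<Rightarrow> bool" where
  "continuous_poset P le \<longleftrightarrow> poset_on P le \<and>
     (\<exists>B\<subseteq>P. \<forall>x\<in>P. \<exists>S. S \<subseteq> B \<inter> wb_down P le x \<and> directed_in P le S \<and> is_sup_in P le S x)"

definition continuous_dcpo :: "'a set \<Rightarrow> ('a \<Rightarrow> 'a \<Rightarrow> bool) \<Rightarrow> bool" where
  "continuous_dcpo P le \<longleftrightarrow> continuous_poset P le \<and>
     (\<forall>S. directed_in P le S \<longrightarrow> (\<exists>s. is_sup_in P le S s))"

definition bicontinuous_poset :: "'a set \<Rightarrow> ('a \<Rightarrow> 'a \<Rightarrow> bool) \<Rightarrow> bool" where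
  "bicontinuous_poset P le \<longleftrightarrow> continuous_poset P le \<and>
     (\<forall>x\<in>P. \<forall>y\<in>P. way_below_in P le x y \<longleftrightarrow>
        (\<forall>S i. filtered_in P le S \<and> is_inf_in P le S i \<and> le i x \<longrightarrow> (\<exists>s\<in>S. le s y))) \<and>
     (\<forall>x\<in>P. filtered_in P le (wb_up P le x) \<and> is_inf_in P le (wb_up P le x) x)"

definition maxD :: "('a::order) set" where
  "maxD = {p. \<forall>y. p \<le> y \<longrightarrow> y = p}"

definition has_meet :: "'a::order \<Rightarrow> 'a \<Rightarrow> bool" where
  "has_meet x y \<longleftrightarrow> (\<exists>z. is_inf_in UNIV (\<le>) {x, y} z)"

definition meet :: "'a::order \<Rightarrow> 'a \<Rightarrow> 'a" where
  "meet x y = (THE z. is_inf_in UNIV (\<le>) {x, y} z)"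

definition dsup :: "('a::order) set \<Rightarrow> 'a" where
  "dsup S = (THE s. is_sup_in UNIV (\<le>) S s)"

definition interval_poset :: "('a::order \<Rightarrow> 'a) \<Rightarrow> ('a \<Rightarrow> 'a) \<Rightarrow> bool" where
  "interval_poset lft rgt \<longleftrightarrow>
     (\<forall>x. lft x \<in> maxD \<and> rgt x \<in> maxD) \<and>
     (\<forall>x. is_inf_in UNIV (\<le>) {lft x, rgt x} x) \<and>
     (\<forall>x y. rgt x = lft y \<longrightarrow>
        has_meet x y \<and> lft (meet x y) = lft x \<and> rgt (meet x y) = rgt y) \<and>
     (\<forall>x p. p \<in> maxD \<and> x \<le> p \<longrightarrow>
        has_meet (lft x) p \<and> has_meet p (rgt x) \<and>
        lft (meet (lft x) p) = lft x \<and> rgt (meet (lft x) p) = p \<and>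
        lft (meet p (rgt x)) = p \<and> rgt (meet p (rgt x)) = rgt x)"

definition maxle :: "('a::order \<Rightarrow> 'a) \<Rightarrow> ('a \<Rightarrow> 'a) \<Rightarrow> 'a \<Rightarrow> 'a \<Rightarrow> bool" where
  "maxle lft rgt a b \<longleftrightarrow> (\<exists>z. a = lft z \<and> b = rgt z)"

definition lfib :: "('a::order \<Rightarrow> 'a) \<Rightarrow> 'a \<Rightarrow> 'a set" where
  "lfib lft p = {x. lft x = p}"

definition rfib :: "('a::order \<Rightarrow> 'a) \<Rightarrow> 'a \<Rightarrow> 'a set" where
  "rfib rgt q = {x. rgt x = q}"

definition scott_open :: "('a::order) set \<Rightarrow> bool" where
  "scott_open U \<longleftrightarrow> (\<forall>x y. x \<in> U \<and> x \<le> y \<longrightarrow> y \<in> U) \<and>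
     (\<forall>S s. directed_in UNIV (\<le>) S \<and> is_sup_in UNIV (\<le>) S s \<and> s \<in> U \<longrightarrow> S \<inter> U \<noteq> {})"

definition scott_compact :: "('a::order) set \<Rightarrow> bool" where
  "scott_compact K \<longleftrightarrow> (\<forall>\<U>. (\<forall>U\<in>\<U>. scott_open U) \<and> K \<subseteq> \<Union>\<U> \<longrightarrow>
     (\<exists>\<F>\<subseteq>\<U>. finite \<F> \<and> K \<subseteq> \<Union>\<F>))"

definition interval_domain :: "('a::order \<Rightarrow> 'a) \<Rightarrow> ('a \<Rightarrow> 'a) \<Rightarrow> bool" where
  "interval_domain lft rgt \<longleftrightarrow>
     interval_poset lft rgt \<and>
     continuous_dcpo (UNIV :: 'a set) (\<le>) \<and>
     \<comment> \<open>(i)\<close>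
     (\<forall>x p. p \<in> wb_up UNIV (\<le>) x \<inter> maxD \<longrightarrow>
        wb_up UNIV (\<le>) (meet (lft x) p) \<noteq> {} \<and> wb_up UNIV (\<le>) (meet p (rgt x)) \<noteq> {}) \<and>
     \<comment> \<open>(ii)\<close>
     (\<forall>x. (wb_up UNIV (\<le>) x \<noteq> {} \<longleftrightarrow>
            (\<forall>y. lft y = lft x \<and> y \<le> x \<longrightarrow> way_below_in (rfib rgt (rgt y)) (\<le>) y (rgt y))) \<and>
          (wb_up UNIV (\<le>) x \<noteq> {} \<longleftrightarrow>
            (\<forall>y. rgt y = rgt x \<and> y \<le> x \<longrightarrow> way_below_in (lfib lft (lft y)) (\<le>) y (lft y)))) \<and>
     \<comment> \<open>(iii)(a)\<close>
     (\<forall>p\<in>maxD. \<forall>S. directed_in UNIV (\<le>) S \<and> S \<subseteq> lfib lft p \<longrightarrow>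
        lft (dsup S) = p \<and>
        (\<forall>q\<in>maxD. \<forall>T. directed_in UNIV (\<le>) T \<and> T \<subseteq> lfib lft q \<and> rgt ` T = rgt ` S \<longrightarrow>
            rgt (dsup S) = rgt (dsup T))) \<and>
     \<comment> \<open>(iii)(b)\<close>
     (\<forall>q\<in>maxD. \<forall>S. directed_in UNIV (\<le>) S \<and> S \<subseteq> rfib rgt q \<longrightarrow>
        rgt (dsup S) = q \<and>
        (\<forall>p\<in>maxD. \<forall>T. directed_in UNIV (\<le>) T \<and> T \<subseteq> rfib rgt p \<and> lft ` T = lft ` S \<longrightarrow>
            lft (dsup S) = lft (dsup T))) \<and>
     \<comment> \<open>(iv)\<close>
     (\<forall>x::'a. scott_compact {y\<in>maxD. x \<le> y})"

end

theory Submission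
  imports Defs
begin

(* Every element z of D is the interval [left z, right z] of (max D, <=): for a <= b there is
   exactly one element with these endpoints, and z grows in D as its endpoints move inwards.
   Continuity of D is transported to max D through the endpoint maps: if S is a directed set of
   approximants of a maximal x, then left ` S is directed with supremum x and consists of elements
   way below x, while right ` S is filtered with infimum x and consists of elements way above x.
   The key tool is axiom (iii): a filtered R in max D with a lower bound v has the infimum
   right (sup {[v, r] | r in R}), and dually for directed sets. Axiom (ii) turns approximation
   inside a fibre [p, .] or [., q] into the way-below relation between the endpoints. *)

lemma poset_on_UNIV: "poset_on (UNIV :: 'a::order set) (\<le>)"
  unfolding poset_on_def by auto

lemma is_sup_in_unique:
  "poset_on P le \<Longrightarrow> is_sup_in P le S s \<Longrightarrow> is_sup_in P le S s' \<Longrightarrow> s = s'"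
  unfolding poset_on_def is_sup_in_def by blast

lemma is_inf_in_unique:
  "poset_on P le \<Longrightarrow> is_inf_in P le S i \<Longrightarrow> is_inf_in P le S i' \<Longrightarrow> i = i'"
  unfolding poset_on_def is_inf_in_def by blast

lemma way_below_in_imp_le:
  assumes "poset_on P le" "y \<in> P" "way_below_in P le x y"
  shows "le x y"
proof -
  have "le y y" using assms(1,2) unfolding poset_on_def by blast
  then have "directed_in P le {y}" "is_sup_in P le {y} y"
    using assms(2) unfolding directed_in_def is_sup_in_def by auto
  then show ?thesis using assms(3) \<open>le y y\<close> unfolding way_below_in_def by blast
qed

lemma way_below_in_mono_left:
  assumes po: "poset_on P le" and "way_below_in P le x y" "le x' x" "x \<in> P" "x' \<in> P"
  shows "way_below_in P le x' y"
  unfolding way_below_in_def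
proof (intro allI impI)
  fix S s assume S: "directed_in P le S \<and> is_sup_in P le S s \<and> le y s"
  then obtain t where "t \<in> S" "le x t" using assms(2) unfolding way_below_in_def by blast
  moreover have "t \<in> P" using S \<open>t \<in> S\<close> unfolding directed_in_def by blast
  ultimately show "\<exists>t\<in>S. le x' t" using po assms(3-5) unfolding poset_on_def by blast
qed

lemma way_below_in_mono_right:
  assumes po: "poset_on P le" and "way_below_in P le x y" "le y y'" "y \<in> P" "y' \<in> P"
  shows "way_below_in P le x y'"
  unfolding way_below_in_def
proof (intro allI impI)
  fix S s assume S: "directed_in P le S \<and> is_sup_in P le S s \<and> le y' s"
  then have "s \<in> P" unfolding is_sup_in_def by blast
  then have "le y s" using S po assms(3-5) unfolding poset_on_def by blast
  then show "\<exists>t\<in>S. le x t" using S assms(2) unfolding way_below_in_def by blast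
qed

lemma way_below_in_subset_supD:
  fixes p :: "'a::order"
  assumes "way_below_in F (\<le>) y p" "directed_in UNIV (\<le>) E" "is_sup_in UNIV (\<le>) E p"
    and "E \<subseteq> F" "p \<in> F"
  shows "\<exists>e\<in>E. y \<le> e"
proof -
  have "directed_in F (\<le>) E" "is_sup_in F (\<le>) E p"
    using assms(2-5) unfolding directed_in_def is_sup_in_def by auto
  then show ?thesis using assms(1) unfolding way_below_in_def by blast
qed

lemma wb_down_directed_sup:
  assumes po: "poset_on P le" and "x \<in> P"
    and L: "L \<subseteq> wb_down P le x" "directed_in P le L" "is_sup_in P le L x"
  shows "directed_in P le (wb_down P le x) \<and> is_sup_in P le (wb_down P le x) x"
proof -
  have "le x x" using po \<open>x \<in> P\<close> unfolding poset_on_def by blast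
  have "\<exists>c\<in>wb_down P le x. le a c \<and> le b c"
    if ab: "a \<in> wb_down P le x" "b \<in> wb_down P le x" for a b
  proof -
    obtain t1 t2 where t: "t1 \<in> L" "le a t1" "t2 \<in> L" "le b t2"
      using ab L \<open>le x x\<close> unfolding wb_down_def way_below_in_def by blast
    then obtain t3 where t3: "t3 \<in> L" "le t1 t3" "le t2 t3"
      using L(2) unfolding directed_in_def by blast
    have "le a t3" "le b t3"
      using po t t3 ab L(1) unfolding poset_on_def wb_down_def by blast+
    with t3 L(1) show ?thesis by blast
  qed
  moreover have "\<forall>a\<in>wb_down P le x. le a x"
    using way_below_in_imp_le[OF po \<open>x \<in> P\<close>] unfolding wb_down_def by blast
  moreover have "le x u" if "u \<in> P" "\<forall>a\<in>wb_down P le x. le a u" for u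
    using that L(1,3) unfolding is_sup_in_def by blast
  moreover have "wb_down P le x \<subseteq> P" "wb_down P le x \<noteq> {}"
    using L(1,2) unfolding wb_down_def directed_in_def by auto
  ultimately show ?thesis
    using \<open>x \<in> P\<close> unfolding directed_in_def is_sup_in_def by blast
qed

lemma wb_up_filtered_inf:
  assumes po: "poset_on P le" and "x \<in> P"
    and R: "R \<subseteq> wb_up P le x" "filtered_in P le R" "is_inf_in P le R x"
    and cofinal: "\<forall>b\<in>P. way_below_in P le x b \<longrightarrow> (\<exists>r\<in>R. le r b)"
  shows "filtered_in P le (wb_up P le x) \<and> is_inf_in P le (wb_up P le x) x"
proof -
  have "\<exists>c\<in>wb_up P le x. le c a \<and> le c b"
    if ab: "a \<in> wb_up P le x" "b \<in> wb_up P le x" for a b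
  proof -
    obtain r1 r2 where r: "r1 \<in> R" "le r1 a" "r2 \<in> R" "le r2 b"
      using ab cofinal unfolding wb_up_def by blast
    then obtain r3 where r3: "r3 \<in> R" "le r3 r1" "le r3 r2"
      using R(2) unfolding filtered_in_def by blast
    have "le r3 a" "le r3 b"
      using po r r3 ab R(1) unfolding poset_on_def wb_up_def by blast+
    with r3 R(1) show ?thesis by blast
  qed
  moreover have "\<forall>a\<in>wb_up P le x. le x a"
    using way_below_in_imp_le[OF po] unfolding wb_up_def by blast
  moreover have "le u x" if "u \<in> P" "\<forall>a\<in>wb_up P le x. le u a" for u
    using that R(1,3) unfolding is_inf_in_def by blast
  moreover have "wb_up P le x \<subseteq> P" "wb_up P le x \<noteq> {}"
    using R(1,2) unfolding wb_up_def filtered_in_def by auto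
  ultimately show ?thesis
    using \<open>x \<in> P\<close> unfolding filtered_in_def is_inf_in_def by blast
qed

lemma way_below_in_if_filtered_approximation:
  assumes po: "poset_on P le" and "a \<in> P" "b \<in> P"
    and R: "R \<subseteq> wb_up P le a" "filtered_in P le R" "is_inf_in P le R a"
    and H: "\<forall>S i. filtered_in P le S \<and> is_inf_in P le S i \<and> le i a \<longrightarrow> (\<exists>s\<in>S. le s b)"
  shows "way_below_in P le a b"
proof -
  have "le a a" using po \<open>a \<in> P\<close> unfolding poset_on_def by blast
  then obtain r where "r \<in> R" "le r b" using H R(2,3) by blast
  then have "way_below_in P le a r" "r \<in> P" using R(1) unfolding wb_up_def by blast+
  then show ?thesis using way_below_in_mono_right[OF po _ \<open>le r b\<close> _ \<open>b \<in> P\<close>] by blast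
qed

lemma bicontinuous_posetI:
  assumes po: "poset_on P le"
    and down: "\<forall>x\<in>P. directed_in P le (wb_down P le x) \<and> is_sup_in P le (wb_down P le x) x"
    and interpolation: "\<forall>x\<in>P. \<forall>y\<in>P. way_below_in P le x y \<longleftrightarrow>
        (\<forall>S i. filtered_in P le S \<and> is_inf_in P le S i \<and> le i x \<longrightarrow> (\<exists>s\<in>S. le s y))"
    and up: "\<forall>x\<in>P. filtered_in P le (wb_up P le x) \<and> is_inf_in P le (wb_up P le x) x"
  shows "bicontinuous_poset P le"
proof -
  have "wb_down P le x \<subseteq> P \<inter> wb_down P le x" for x unfolding wb_down_def by blast
  then have "continuous_poset P le"
    using po down unfolding continuous_poset_def by (intro conjI exI[of _ P]) auto
  then show ?thesis using interpolation up unfolding bicontinuous_poset_def by (intro conjI)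
qed

lemma dsup_eq:
  fixes s :: "'a::order"
  assumes "is_sup_in UNIV (\<le>) S s"
  shows "dsup S = s"
  unfolding dsup_def using assms is_sup_in_unique[OF poset_on_UNIV] by blast

lemma meet_is_inf:
  fixes x y :: "'a::order"
  assumes "has_meet x y"
  shows "is_inf_in UNIV (\<le>) {x, y} (meet x y)"
  using assms is_inf_in_unique[OF poset_on_UNIV] unfolding has_meet_def meet_def
  by (metis (mono_tags, lifting) theI)

locale interval_dom =
  fixes lft rgt :: "'a::order \<Rightarrow> 'a"
  assumes interval_domain_lft_rgt: "interval_domain lft rgt"
begin

abbreviation maxle_infix (infix "\<preceq>" 50) where "a \<preceq> b \<equiv> maxle lft rgt a b"

(* The element [a, b] with endpoints a and b; unspecified unless a \<preceq> b. *)
definition ival :: "'a \<Rightarrow> 'a \<Rightarrow> 'a" where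
  "ival a b = (SOME z. lft z = a \<and> rgt z = b)"

lemma interval_poset_lft_rgt: "interval_poset lft rgt"
  using interval_domain_lft_rgt unfolding interval_domain_def by (elim conjE)

lemma continuous_dcpo_UNIV: "continuous_dcpo (UNIV :: 'a set) (\<le>)"
  using interval_domain_lft_rgt unfolding interval_domain_def by (elim conjE)

lemma lft_maxD: "lft x \<in> maxD" and rgt_maxD: "rgt x \<in> maxD"
  using interval_poset_lft_rgt[unfolded interval_poset_def, THEN conjunct1] by blast+

lemma is_inf_lft_rgt: "is_inf_in UNIV (\<le>) {lft x, rgt x} x"
  using interval_poset_lft_rgt[unfolded interval_poset_def, THEN conjunct2, THEN conjunct1] by blast

lemma meet_endpoints:
  "rgt x = lft y \<Longrightarrow> has_meet x y \<and> lft (meet x y) = lft x \<and> rgt (meet x y) = rgt y"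
  using interval_poset_lft_rgt[unfolded interval_poset_def, THEN conjunct2, THEN conjunct2, THEN conjunct1]
  by blast

lemma meet_max_endpoints:
  assumes "p \<in> maxD" "x \<le> p"
  shows "lft (meet (lft x) p) = lft x \<and> rgt (meet (lft x) p) = p \<and>
    lft (meet p (rgt x)) = p \<and> rgt (meet p (rgt x)) = rgt x"
  using interval_poset_lft_rgt[unfolded interval_poset_def, THEN conjunct2, THEN conjunct2, THEN conjunct2]
    assms by blast

lemma wb_up_meet_nonempty:
  assumes "way_below_in UNIV (\<le>) x p" "p \<in> maxD"
  shows "wb_up UNIV (\<le>) (meet (lft x) p) \<noteq> {} \<and> wb_up UNIV (\<le>) (meet p (rgt x)) \<noteq> {}"
proof -
  have "p \<in> wb_up UNIV (\<le>) x \<inter> maxD" using assms unfolding wb_up_def by blast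
  then show ?thesis
    using interval_domain_lft_rgt[unfolded interval_domain_def, THEN conjunct2, THEN conjunct2,
        THEN conjunct1] by blast
qed

lemma way_below_in_rfib:
  assumes "wb_up UNIV (\<le>) x \<noteq> {}" "lft y = lft x" "y \<le> x"
  shows "way_below_in (rfib rgt (rgt y)) (\<le>) y (rgt y)"
  using interval_domain_lft_rgt[unfolded interval_domain_def, THEN conjunct2, THEN conjunct2,
      THEN conjunct2, THEN conjunct1, rule_format, of x, THEN conjunct1] assms by blast

lemma way_below_in_lfib:
  assumes "wb_up UNIV (\<le>) x \<noteq> {}" "rgt y = rgt x" "y \<le> x"
  shows "way_below_in (lfib lft (lft y)) (\<le>) y (lft y)"
  using interval_domain_lft_rgt[unfolded interval_domain_def, THEN conjunct2, THEN conjunct2,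
      THEN conjunct2, THEN conjunct1, rule_format, of x, THEN conjunct2] assms by blast

lemma lft_dsup_lfib:
  assumes "p \<in> maxD" "directed_in UNIV (\<le>) S" "S \<subseteq> lfib lft p"
  shows "lft (dsup S) = p"
  using interval_domain_lft_rgt[unfolded interval_domain_def, THEN conjunct2, THEN conjunct2,
      THEN conjunct2, THEN conjunct2, THEN conjunct1, rule_format, OF assms(1) conjI, OF assms(2,3)]
  by blast

lemma rgt_dsup_lfib_eq:
  assumes "p \<in> maxD" "directed_in UNIV (\<le>) S" "S \<subseteq> lfib lft p"
    and "q \<in> maxD" "directed_in UNIV (\<le>) T" "T \<subseteq> lfib lft q" "rgt ` T = rgt ` S"
  shows "rgt (dsup S) = rgt (dsup T)"
  using interval_domain_lft_rgt[unfolded interval_domain_def, THEN conjunct2, THEN conjunct2,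
      THEN conjunct2, THEN conjunct2, THEN conjunct1, rule_format, OF assms(1) conjI, OF assms(2,3)]
    assms(4-7) by blast

lemma rgt_dsup_rfib:
  assumes "q \<in> maxD" "directed_in UNIV (\<le>) S" "S \<subseteq> rfib rgt q"
  shows "rgt (dsup S) = q"
  using interval_domain_lft_rgt[unfolded interval_domain_def, THEN conjunct2, THEN conjunct2,
      THEN conjunct2, THEN conjunct2, THEN conjunct2, THEN conjunct1, rule_format,
      OF assms(1) conjI, OF assms(2,3)]
  by blast

lemma lft_dsup_rfib_eq:
  assumes "q \<in> maxD" "directed_in UNIV (\<le>) S" "S \<subseteq> rfib rgt q"
    and "p \<in> maxD" "directed_in UNIV (\<le>) T" "T \<subseteq> rfib rgt p" "lft ` T = lft ` S"
  shows "lft (dsup S) = lft (dsup T)"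
  using interval_domain_lft_rgt[unfolded interval_domain_def, THEN conjunct2, THEN conjunct2,
      THEN conjunct2, THEN conjunct2, THEN conjunct2, THEN conjunct1, rule_format,
      OF assms(1) conjI, OF assms(2,3)]
    assms(4-7) by blast

lemma le_lft: "x \<le> lft x" and le_rgt: "x \<le> rgt x"
  using is_inf_lft_rgt[of x] unfolding is_inf_in_def by auto

lemma le_if_le_endpoints: "z \<le> lft x \<Longrightarrow> z \<le> rgt x \<Longrightarrow> z \<le> x"
  using is_inf_lft_rgt[of x] unfolding is_inf_in_def by auto

lemma endpoints_inject: "lft x = lft y \<Longrightarrow> rgt x = rgt y \<Longrightarrow> x = y"
  using is_inf_lft_rgt[of x] is_inf_lft_rgt[of y] is_inf_in_unique[OF poset_on_UNIV] by metis

lemma endpoints_maxD: "p \<in> maxD \<Longrightarrow> lft p = p \<and> rgt p = p"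
  using le_lft le_rgt unfolding maxD_def by blast

lemma meet_le: "rgt x = lft y \<Longrightarrow> meet x y \<le> x \<and> meet x y \<le> y"
  using meet_endpoints meet_is_inf unfolding is_inf_in_def by blast

lemma maxleI: "lft z = a \<Longrightarrow> rgt z = b \<Longrightarrow> a \<preceq> b"
  unfolding maxle_def by blast

lemma maxle_maxD: "a \<preceq> b \<Longrightarrow> a \<in> maxD \<and> b \<in> maxD"
  unfolding maxle_def using lft_maxD rgt_maxD by blast

lemma maxle_refl: "p \<in> maxD \<Longrightarrow> p \<preceq> p"
  using endpoints_maxD maxleI by blast

lemma maxle_trans: "a \<preceq> b \<Longrightarrow> b \<preceq> c \<Longrightarrow> a \<preceq> c"
  unfolding maxle_def using meet_endpoints by metis

lemma maxle_antisym: "a \<preceq> b \<Longrightarrow> b \<preceq> a \<Longrightarrow> a = b"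
proof -
  assume "a \<preceq> b" "b \<preceq> a"
  then obtain z w where z: "lft z = a" "rgt z = b" and w: "lft w = b" "rgt w = a"
    unfolding maxle_def by metis
  have "is_inf_in UNIV (\<le>) {a, b} z" "is_inf_in UNIV (\<le>) {a, b} w"
    using is_inf_lft_rgt[of z] is_inf_lft_rgt[of w] z w by (simp_all add: insert_commute)
  then have "z = w" by (rule is_inf_in_unique[OF poset_on_UNIV])
  then show "a = b" using z w by simp
qed

lemma poset_on_maxle: "poset_on maxD (\<preceq>)"
  unfolding poset_on_def using maxle_refl maxle_trans maxle_antisym by blast

lemma maxle_if_le_maxD: "x \<le> p \<Longrightarrow> p \<in> maxD \<Longrightarrow> lft x \<preceq> p \<and> p \<preceq> rgt x"
  using meet_max_endpoints maxleI by metis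

lemma maxle_lft_mono: "x \<le> y \<Longrightarrow> lft x \<preceq> lft y"
  using maxle_if_le_maxD[OF order.trans[OF _ le_lft] lft_maxD] by blast

lemma maxle_rgt_antimono: "x \<le> y \<Longrightarrow> rgt y \<preceq> rgt x"
  using maxle_if_le_maxD[OF order.trans[OF _ le_rgt] rgt_maxD] by blast

lemma lft_ival: "a \<preceq> b \<Longrightarrow> lft (ival a b) = a" and rgt_ival: "a \<preceq> b \<Longrightarrow> rgt (ival a b) = b"
  unfolding ival_def maxle_def by (metis (mono_tags, lifting) someI_ex)+

lemma ival_unique: "lft z = a \<Longrightarrow> rgt z = b \<Longrightarrow> ival a b = z"
  using lft_ival rgt_ival maxleI endpoints_inject by metis

lemma ival_mono_left:
  assumes "a \<preceq> a'" "a' \<preceq> b"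
  shows "ival a b \<le> ival a' b"
proof -
  let ?m = "meet (ival a a') (ival a' b)"
  have "rgt (ival a a') = lft (ival a' b)" using assms by (simp add: lft_ival rgt_ival)
  then have "lft ?m = a" "rgt ?m = b" "?m \<le> ival a' b"
    using meet_endpoints meet_le assms by (simp_all add: lft_ival rgt_ival)
  then show ?thesis using ival_unique by metis
qed

lemma ival_antimono_right:
  assumes "a \<preceq> b'" "b' \<preceq> b"
  shows "ival a b \<le> ival a b'"
proof -
  let ?m = "meet (ival a b') (ival b' b)"
  have "rgt (ival a b') = lft (ival b' b)" using assms by (simp add: lft_ival rgt_ival)
  then have "lft ?m = a" "rgt ?m = b" "?m \<le> ival a b'"
    using meet_endpoints meet_le assms by (simp_all add: lft_ival rgt_ival)
  then show ?thesis using ival_unique by metis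
qed

lemma le_ival_lft: "y \<le> p \<Longrightarrow> p \<in> maxD \<Longrightarrow> y \<le> ival (lft y) p"
  using le_if_le_endpoints le_lft maxle_if_le_maxD lft_ival rgt_ival by metis

lemma le_ival_rgt: "y \<le> p \<Longrightarrow> p \<in> maxD \<Longrightarrow> y \<le> ival p (rgt y)"
  using le_if_le_endpoints le_rgt maxle_if_le_maxD lft_ival rgt_ival by metis


lemma is_sup_dsup:
  assumes "directed_in UNIV (\<le>) (S :: 'a set)"
  shows "is_sup_in UNIV (\<le>) S (dsup S)"
proof -
  have "\<exists>s. is_sup_in UNIV (\<le>) S s"
    using continuous_dcpo_UNIV[unfolded continuous_dcpo_def, THEN conjunct2] assms by blast
  then show ?thesis using dsup_eq by metis
qed

lemma exists_way_below_directed_sup: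
  "\<exists>S. S \<subseteq> wb_down UNIV (\<le>) (x :: 'a) \<and> directed_in UNIV (\<le>) S \<and> is_sup_in UNIV (\<le>) S x"
proof -
  obtain B where "\<forall>x\<in>UNIV. \<exists>S. S \<subseteq> B \<inter> wb_down UNIV (\<le>) x \<and> directed_in UNIV (\<le>) S \<and>
      is_sup_in UNIV (\<le>) S (x :: 'a)"
    using continuous_dcpo_UNIV[unfolded continuous_dcpo_def continuous_poset_def, THEN conjunct1,
        THEN conjunct2] by (elim exE conjE)
  then obtain S where "S \<subseteq> B \<inter> wb_down UNIV (\<le>) x" "directed_in UNIV (\<le>) S"
    "is_sup_in UNIV (\<le>) S x" by (meson UNIV_I)
  then show ?thesis by (intro exI[of _ S]) blast
qed

lemma directed_ival_lft_image:
  assumes L: "directed_in maxD (\<preceq>) L" and ub: "\<forall>t\<in>L. t \<preceq> u"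
  shows "directed_in UNIV (\<le>) ((\<lambda>t. ival t u) ` L)"
  unfolding directed_in_def
proof (intro conjI ballI)
  show "(\<lambda>t. ival t u) ` L \<subseteq> UNIV" "(\<lambda>t. ival t u) ` L \<noteq> {}"
    using L unfolding directed_in_def by auto
  fix a b assume "a \<in> (\<lambda>t. ival t u) ` L" "b \<in> (\<lambda>t. ival t u) ` L"
  then obtain t1 t2 where t12: "t1 \<in> L" "t2 \<in> L" "a = ival t1 u" "b = ival t2 u" by blast
  then obtain t where t: "t \<in> L" "t1 \<preceq> t" "t2 \<preceq> t" using L unfolding directed_in_def by blast
  then have "a \<le> ival t u" "b \<le> ival t u"
    using t12 ival_mono_left[OF _ ub[rule_format]] by simp_all
  with t(1) show "\<exists>c\<in>(\<lambda>t. ival t u) ` L. a \<le> c \<and> b \<le> c" by blast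
qed

lemma directed_ival_rgt_image:
  assumes R: "filtered_in maxD (\<preceq>) R" and lb: "\<forall>r\<in>R. v \<preceq> r"
  shows "directed_in UNIV (\<le>) (ival v ` R)"
  unfolding directed_in_def
proof (intro conjI ballI)
  show "ival v ` R \<subseteq> UNIV" "ival v ` R \<noteq> {}"
    using R unfolding filtered_in_def by auto
  fix a b assume "a \<in> ival v ` R" "b \<in> ival v ` R"
  then obtain r1 r2 where r12: "r1 \<in> R" "r2 \<in> R" "a = ival v r1" "b = ival v r2" by blast
  then obtain r where r: "r \<in> R" "r \<preceq> r1" "r \<preceq> r2" using R unfolding filtered_in_def by blast
  then have "a \<le> ival v r" "b \<le> ival v r"
    using r12 ival_antimono_right[OF lb[rule_format]] by simp_all
  with r(1) show "\<exists>c\<in>ival v ` R. a \<le> c \<and> b \<le> c" by blast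
qed

lemma is_sup_lft_dsup_ival:
  assumes L: "directed_in maxD (\<preceq>) L" and ub: "\<forall>t\<in>L. t \<preceq> u"
  shows "is_sup_in maxD (\<preceq>) L (lft (dsup ((\<lambda>t. ival t u) ` L)))"
proof -
  have fan: "directed_in UNIV (\<le>) ((\<lambda>t. ival t w) ` L)" "(\<lambda>t. ival t w) ` L \<subseteq> rfib rgt w"
    "lft ` (\<lambda>t. ival t w) ` L = L" "w \<in> maxD" if "\<forall>t\<in>L. t \<preceq> w" for w
  proof -
    show "directed_in UNIV (\<le>) ((\<lambda>t. ival t w) ` L)" by (rule directed_ival_lft_image[OF L that])
    show "(\<lambda>t. ival t w) ` L \<subseteq> rfib rgt w" using that unfolding rfib_def by (auto simp: rgt_ival)
    show "lft ` (\<lambda>t. ival t w) ` L = L"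
      using that by (simp add: image_image lft_ival cong: image_cong)
    show "w \<in> maxD" using L that maxle_maxD unfolding directed_in_def by blast
  qed
  define d where "d = dsup ((\<lambda>t. ival t u) ` L)"
  have "t \<preceq> lft d" if "t \<in> L" for t
  proof -
    have "ival t u \<le> d" using is_sup_dsup[OF fan(1)[OF ub]] that unfolding d_def is_sup_in_def by blast
    then show ?thesis using maxle_lft_mono lft_ival ub that by metis
  qed
  moreover have "lft d \<preceq> w" if w: "w \<in> maxD" "\<forall>t\<in>L. t \<preceq> w" for w
  proof -
    \<comment> \<open>by (iii)(b) the left endpoint of the supremum of [L, w] does not depend on w\<close>
    have "lft d = lft (dsup ((\<lambda>t. ival t w) ` L))"
      unfolding d_def using lft_dsup_rfib_eq[OF fan(4,1,2)[OF ub] w(1) fan(1,2)[OF w(2)]]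
        fan(3)[OF ub] fan(3)[OF w(2)] by simp
    moreover have "rgt (dsup ((\<lambda>t. ival t w) ` L)) = w"
      by (rule rgt_dsup_rfib[OF w(1) fan(1,2)[OF w(2)]])
    ultimately show ?thesis using maxleI by metis
  qed
  ultimately show ?thesis unfolding is_sup_in_def d_def[symmetric] using lft_maxD by blast
qed

lemma is_inf_rgt_dsup_ival:
  assumes R: "filtered_in maxD (\<preceq>) R" and lb: "\<forall>r\<in>R. v \<preceq> r"
  shows "is_inf_in maxD (\<preceq>) R (rgt (dsup (ival v ` R)))"
proof -
  have fan: "directed_in UNIV (\<le>) (ival w ` R)" "ival w ` R \<subseteq> lfib lft w"
    "rgt ` ival w ` R = R" "w \<in> maxD" if "\<forall>r\<in>R. w \<preceq> r" for w
  proof -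
    show "directed_in UNIV (\<le>) (ival w ` R)" by (rule directed_ival_rgt_image[OF R that])
    show "ival w ` R \<subseteq> lfib lft w" using that unfolding lfib_def by (auto simp: lft_ival)
    show "rgt ` ival w ` R = R"
      using that by (simp add: image_image rgt_ival cong: image_cong)
    show "w \<in> maxD" using R that maxle_maxD unfolding filtered_in_def by blast
  qed
  define d where "d = dsup (ival v ` R)"
  have "rgt d \<preceq> r" if "r \<in> R" for r
  proof -
    have "ival v r \<le> d" using is_sup_dsup[OF fan(1)[OF lb]] that unfolding d_def is_sup_in_def by blast
    then show ?thesis using maxle_rgt_antimono rgt_ival lb that by metis
  qed
  moreover have "w \<preceq> rgt d" if w: "w \<in> maxD" "\<forall>r\<in>R. w \<preceq> r" for w
  proof -
    \<comment> \<open>by (iii)(a) the right endpoint of the supremum of [w, R] does not depend on w\<close>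
    have "rgt d = rgt (dsup (ival w ` R))"
      unfolding d_def using rgt_dsup_lfib_eq[OF fan(4,1,2)[OF lb] w(1) fan(1,2)[OF w(2)]]
        fan(3)[OF lb] fan(3)[OF w(2)] by simp
    moreover have "lft (dsup (ival w ` R)) = w"
      by (rule lft_dsup_lfib[OF w(1) fan(1,2)[OF w(2)]])
    ultimately show ?thesis using maxleI by metis
  qed
  ultimately show ?thesis unfolding is_inf_in_def d_def[symmetric] using rgt_maxD by blast
qed

lemma dsup_ival_lft_image:
  assumes L: "directed_in maxD (\<preceq>) L" and s: "is_sup_in maxD (\<preceq>) L s"
  shows "dsup ((\<lambda>t. ival t s) ` L) = s"
proof -
  have ub: "\<forall>t\<in>L. t \<preceq> s" "s \<in> maxD" using s unfolding is_sup_in_def by auto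
  have "lft (dsup ((\<lambda>t. ival t s) ` L)) = s"
    using is_sup_in_unique[OF poset_on_maxle is_sup_lft_dsup_ival[OF L ub(1)] s] .
  moreover have "(\<lambda>t. ival t s) ` L \<subseteq> rfib rgt s"
    using ub(1) unfolding rfib_def by (auto simp: rgt_ival)
  then have "rgt (dsup ((\<lambda>t. ival t s) ` L)) = s"
    by (rule rgt_dsup_rfib[OF ub(2) directed_ival_lft_image[OF L ub(1)]])
  ultimately show ?thesis using endpoints_inject endpoints_maxD[OF ub(2)] by metis
qed

lemma dsup_ival_rgt_image:
  assumes R: "filtered_in maxD (\<preceq>) R" and i: "is_inf_in maxD (\<preceq>) R i"
  shows "dsup (ival i ` R) = i"
proof -
  have lb: "\<forall>r\<in>R. i \<preceq> r" "i \<in> maxD" using i unfolding is_inf_in_def by auto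
  have "rgt (dsup (ival i ` R)) = i"
    using is_inf_in_unique[OF poset_on_maxle is_inf_rgt_dsup_ival[OF R lb(1)] i] .
  moreover have "ival i ` R \<subseteq> lfib lft i"
    using lb(1) unfolding lfib_def by (auto simp: lft_ival)
  then have "lft (dsup (ival i ` R)) = i"
    by (rule lft_dsup_lfib[OF lb(2) directed_ival_rgt_image[OF R lb(1)]])
  ultimately show ?thesis using endpoints_inject endpoints_maxD[OF lb(2)] by metis
qed


lemma is_sup_ival_lft_image:
  assumes S: "is_sup_in UNIV (\<le>) S x" and "x \<in> maxD"
  shows "is_sup_in UNIV (\<le>) ((\<lambda>y. ival (lft y) x) ` S) x"
proof -
  have "y \<le> x" if "y \<in> S" for y using S that unfolding is_sup_in_def by blast
  then have "ival (lft y) x \<le> x" "y \<le> ival (lft y) x" if "y \<in> S" for y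
    using that le_rgt rgt_ival maxle_if_le_maxD le_ival_lft \<open>x \<in> maxD\<close> by metis+
  then show ?thesis using S unfolding is_sup_in_def by (blast intro: order.trans)
qed

lemma is_sup_ival_rgt_image:
  assumes S: "is_sup_in UNIV (\<le>) S x" and "x \<in> maxD"
  shows "is_sup_in UNIV (\<le>) ((\<lambda>y. ival x (rgt y)) ` S) x"
proof -
  have "y \<le> x" if "y \<in> S" for y using S that unfolding is_sup_in_def by blast
  then have "ival x (rgt y) \<le> x" "y \<le> ival x (rgt y)" if "y \<in> S" for y
    using that le_lft lft_ival maxle_if_le_maxD le_ival_rgt \<open>x \<in> maxD\<close> by metis+
  then show ?thesis using S unfolding is_sup_in_def by (blast intro: order.trans)
qed

lemma directed_lft_image: "directed_in UNIV (\<le>) S \<Longrightarrow> directed_in maxD (\<preceq>) (lft ` S)"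
  unfolding directed_in_def using lft_maxD maxle_lft_mono by blast

lemma filtered_rgt_image: "directed_in UNIV (\<le>) S \<Longrightarrow> filtered_in maxD (\<preceq>) (rgt ` S)"
  unfolding directed_in_def filtered_in_def using rgt_maxD maxle_rgt_antimono by blast

lemma is_sup_lft_image:
  assumes S: "directed_in UNIV (\<le>) S" "is_sup_in UNIV (\<le>) S x" and "x \<in> maxD"
  shows "is_sup_in maxD (\<preceq>) (lft ` S) x"
proof -
  have ub: "\<forall>t\<in>lft ` S. t \<preceq> x"
    using S(2) maxle_if_le_maxD \<open>x \<in> maxD\<close> unfolding is_sup_in_def by blast
  have "dsup ((\<lambda>t. ival t x) ` lft ` S) = x"
    using dsup_eq[OF is_sup_ival_lft_image[OF S(2) \<open>x \<in> maxD\<close>]] by (simp add: image_image)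
  then show ?thesis
    using is_sup_lft_dsup_ival[OF directed_lft_image[OF S(1)] ub] endpoints_maxD[OF \<open>x \<in> maxD\<close>]
    by simp
qed

lemma is_inf_rgt_image:
  assumes S: "directed_in UNIV (\<le>) S" "is_sup_in UNIV (\<le>) S x" and "x \<in> maxD"
  shows "is_inf_in maxD (\<preceq>) (rgt ` S) x"
proof -
  have lb: "\<forall>r\<in>rgt ` S. x \<preceq> r"
    using S(2) maxle_if_le_maxD \<open>x \<in> maxD\<close> unfolding is_sup_in_def by blast
  have "dsup (ival x ` rgt ` S) = x"
    using dsup_eq[OF is_sup_ival_rgt_image[OF S(2) \<open>x \<in> maxD\<close>]] by (simp add: image_image)
  then show ?thesis
    using is_inf_rgt_dsup_ival[OF filtered_rgt_image[OF S(1)] lb] endpoints_maxD[OF \<open>x \<in> maxD\<close>]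
    by simp
qed


lemma way_below_lft_rgt:
  assumes "wb_up UNIV (\<le>) z \<noteq> {}"
  shows "way_below_in maxD (\<preceq>) (lft z) (rgt z)"
  unfolding way_below_in_def
proof (intro allI impI)
  fix S s assume "directed_in maxD (\<preceq>) S \<and> is_sup_in maxD (\<preceq>) S s \<and> rgt z \<preceq> s"
  then have S: "directed_in maxD (\<preceq>) S" "is_sup_in maxD (\<preceq>) S s" and "rgt z \<preceq> s" by auto
  have ub: "\<forall>t\<in>S. t \<preceq> s" "s \<in> maxD" using S(2) unfolding is_sup_in_def by auto
  define y where "y = meet z (ival (rgt z) s)"
  have y: "lft y = lft z" "rgt y = s" "y \<le> z"
    using meet_endpoints[of z "ival (rgt z) s"] meet_le[of z "ival (rgt z) s"] \<open>rgt z \<preceq> s\<close>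
    unfolding y_def by (simp_all add: lft_ival rgt_ival)
  define E where "E = (\<lambda>t. ival t s) ` S"
  have "way_below_in (rfib rgt s) (\<le>) y s"
    using way_below_in_rfib[OF assms y(1,3)] y(2) by simp
  moreover have "directed_in UNIV (\<le>) E" unfolding E_def by (rule directed_ival_lft_image[OF S(1) ub(1)])
  moreover have "is_sup_in UNIV (\<le>) E s"
    using is_sup_dsup[OF \<open>directed_in UNIV (\<le>) E\<close>] dsup_ival_lft_image[OF S] unfolding E_def by simp
  moreover have "E \<subseteq> rfib rgt s" "s \<in> rfib rgt s"
    using ub endpoints_maxD unfolding E_def rfib_def by (auto simp: rgt_ival)
  ultimately obtain t where "t \<in> S" "y \<le> ival t s"
    using way_below_in_subset_supD unfolding E_def by blast
  then have "lft z \<preceq> t" using maxle_lft_mono lft_ival ub(1) y(1) by metis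
  with \<open>t \<in> S\<close> show "\<exists>t\<in>S. lft z \<preceq> t" by blast
qed

lemma way_below_maxD_endpoints:
  assumes "p \<in> maxD" "way_below_in UNIV (\<le>) y p"
  shows "way_below_in maxD (\<preceq>) (lft y) p \<and> way_below_in maxD (\<preceq>) p (rgt y)"
proof -
  have "y \<le> p" by (rule way_below_in_imp_le[OF poset_on_UNIV UNIV_I assms(2)])
  then show ?thesis
    using way_below_lft_rgt wb_up_meet_nonempty[OF assms(2,1)] meet_max_endpoints[OF assms(1)]
    by metis
qed

lemma way_below_maxle_approximation:
  assumes "x \<in> maxD"
  shows "\<exists>L\<subseteq>wb_down maxD (\<preceq>) x. directed_in maxD (\<preceq>) L \<and> is_sup_in maxD (\<preceq>) L x"
proof -
  obtain S where S: "S \<subseteq> wb_down UNIV (\<le>) x" "directed_in UNIV (\<le>) S" "is_sup_in UNIV (\<le>) S x"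
    using exists_way_below_directed_sup by blast
  have "lft ` S \<subseteq> wb_down maxD (\<preceq>) x"
    using S(1) way_below_maxD_endpoints[OF assms] lft_maxD unfolding wb_down_def by auto
  then show ?thesis using directed_lft_image[OF S(2)] is_sup_lft_image[OF S(2,3) assms] by blast
qed

lemma way_above_maxle_approximation:
  assumes "x \<in> maxD"
  shows "\<exists>R\<subseteq>wb_up maxD (\<preceq>) x. filtered_in maxD (\<preceq>) R \<and> is_inf_in maxD (\<preceq>) R x"
proof -
  obtain S where S: "S \<subseteq> wb_down UNIV (\<le>) x" "directed_in UNIV (\<le>) S" "is_sup_in UNIV (\<le>) S x"
    using exists_way_below_directed_sup by blast
  have "rgt ` S \<subseteq> wb_up maxD (\<preceq>) x"
    using S(1) way_below_maxD_endpoints[OF assms] rgt_maxD unfolding wb_down_def wb_up_def by auto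
  then show ?thesis using filtered_rgt_image[OF S(2)] is_inf_rgt_image[OF S(2,3) assms] by blast
qed

lemma wb_up_ival_nonempty:
  assumes "b \<in> maxD" "way_below_in maxD (\<preceq>) a b"
  shows "wb_up UNIV (\<le>) (ival a b) \<noteq> {}"
proof -
  obtain S where S: "S \<subseteq> wb_down UNIV (\<le>) b" "directed_in UNIV (\<le>) S" "is_sup_in UNIV (\<le>) S b"
    using exists_way_below_directed_sup by blast
  have "\<exists>t\<in>lft ` S. a \<preceq> t"
    using assms(2) directed_lft_image[OF S(2)] is_sup_lft_image[OF S(2,3) assms(1)]
      maxle_refl[OF assms(1)] unfolding way_below_in_def by blast
  then obtain y where "y \<in> S" "a \<preceq> lft y" by blast
  then have wy: "way_below_in UNIV (\<le>) y b" using S(1) unfolding wb_down_def by blast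
  then have "y \<le> b" by (rule way_below_in_imp_le[OF poset_on_UNIV UNIV_I])
  obtain w where "way_below_in UNIV (\<le>) (meet (lft y) b) w"
    using wb_up_meet_nonempty[OF wy assms(1)] unfolding wb_up_def by blast
  moreover have "meet (lft y) b = ival (lft y) b"
    using ival_unique meet_max_endpoints[OF assms(1) \<open>y \<le> b\<close>] by metis
  moreover have "ival a b \<le> ival (lft y) b"
    using ival_mono_left \<open>a \<preceq> lft y\<close> maxle_if_le_maxD[OF \<open>y \<le> b\<close> assms(1)] by blast
  ultimately have "way_below_in UNIV (\<le>) (ival a b) w"
    using way_below_in_mono_left[OF poset_on_UNIV] by simp
  then show ?thesis unfolding wb_up_def by blast
qed

lemma way_below_filtered_inf:
  assumes "b \<in> maxD" "way_below_in maxD (\<preceq>) a b"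
    and S: "filtered_in maxD (\<preceq>) S" "is_inf_in maxD (\<preceq>) S i" and "i \<preceq> a"
  shows "\<exists>s\<in>S. s \<preceq> b"
proof -
  have "a \<preceq> b" by (rule way_below_in_imp_le[OF poset_on_maxle assms(1,2)])
  then have "i \<preceq> b" using maxle_trans \<open>i \<preceq> a\<close> by blast
  have lb: "\<forall>s\<in>S. i \<preceq> s" "i \<in> maxD" using S(2) unfolding is_inf_in_def by auto
  have "ival i b \<le> ival a b" by (rule ival_mono_left[OF \<open>i \<preceq> a\<close> \<open>a \<preceq> b\<close>])
  then have "way_below_in (lfib lft i) (\<le>) (ival i b) i"
    using way_below_in_lfib[OF wb_up_ival_nonempty[OF assms(1,2)], of "ival i b"]
      \<open>i \<preceq> b\<close> \<open>a \<preceq> b\<close> by (simp add: lft_ival rgt_ival)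
  moreover have "directed_in UNIV (\<le>) (ival i ` S)" by (rule directed_ival_rgt_image[OF S(1) lb(1)])
  moreover have "is_sup_in UNIV (\<le>) (ival i ` S) i"
    using is_sup_dsup[OF \<open>directed_in UNIV (\<le>) (ival i ` S)\<close>] dsup_ival_rgt_image[OF S] by simp
  moreover have "ival i ` S \<subseteq> lfib lft i" "i \<in> lfib lft i"
    using lb endpoints_maxD unfolding lfib_def by (auto simp: lft_ival)
  ultimately obtain s where "s \<in> S" "ival i b \<le> ival i s"
    using way_below_in_subset_supD by blast
  then have "s \<preceq> b" using maxle_rgt_antimono rgt_ival lb(1) \<open>i \<preceq> b\<close> by metis
  with \<open>s \<in> S\<close> show ?thesis by blast
qed

lemma wb_down_maxle_directed_sup:
  assumes "x \<in> maxD"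
  shows "directed_in maxD (\<preceq>) (wb_down maxD (\<preceq>) x) \<and> is_sup_in maxD (\<preceq>) (wb_down maxD (\<preceq>) x) x"
proof -
  obtain L where "L \<subseteq> wb_down maxD (\<preceq>) x" "directed_in maxD (\<preceq>) L" "is_sup_in maxD (\<preceq>) L x"
    using way_below_maxle_approximation[OF assms] by blast
  then show ?thesis by (rule wb_down_directed_sup[OF poset_on_maxle assms])
qed

lemma wb_up_maxle_filtered_inf:
  assumes "x \<in> maxD"
  shows "filtered_in maxD (\<preceq>) (wb_up maxD (\<preceq>) x) \<and> is_inf_in maxD (\<preceq>) (wb_up maxD (\<preceq>) x) x"
proof -
  obtain R where R: "R \<subseteq> wb_up maxD (\<preceq>) x" "filtered_in maxD (\<preceq>) R" "is_inf_in maxD (\<preceq>) R x"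
    using way_above_maxle_approximation[OF assms] by blast
  moreover have "\<forall>b\<in>maxD. way_below_in maxD (\<preceq>) x b \<longrightarrow> (\<exists>r\<in>R. r \<preceq> b)"
    using way_below_filtered_inf[OF _ _ R(2,3) maxle_refl[OF assms]] by blast
  ultimately show ?thesis by (rule wb_up_filtered_inf[OF poset_on_maxle assms])
qed

lemma way_below_maxle_iff:
  assumes "a \<in> maxD" "b \<in> maxD"
  shows "way_below_in maxD (\<preceq>) a b \<longleftrightarrow>
    (\<forall>S i. filtered_in maxD (\<preceq>) S \<and> is_inf_in maxD (\<preceq>) S i \<and> i \<preceq> a \<longrightarrow> (\<exists>s\<in>S. s \<preceq> b))"
proof
  show "way_below_in maxD (\<preceq>) a b \<Longrightarrow>
      \<forall>S i. filtered_in maxD (\<preceq>) S \<and> is_inf_in maxD (\<preceq>) S i \<and> i \<preceq> a \<longrightarrow> (\<exists>s\<in>S. s \<preceq> b)"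
    using way_below_filtered_inf[OF assms(2)] by blast
  obtain R where "R \<subseteq> wb_up maxD (\<preceq>) a" "filtered_in maxD (\<preceq>) R" "is_inf_in maxD (\<preceq>) R a"
    using way_above_maxle_approximation[OF assms(1)] by blast
  then show "\<forall>S i. filtered_in maxD (\<preceq>) S \<and> is_inf_in maxD (\<preceq>) S i \<and> i \<preceq> a \<longrightarrow> (\<exists>s\<in>S. s \<preceq> b)
      \<Longrightarrow> way_below_in maxD (\<preceq>) a b"
    using way_below_in_if_filtered_approximation[OF poset_on_maxle assms] by blast
qed

end

theorem mainTheorem12:
  fixes lft rgt :: "'a::order \<Rightarrow> 'a"
  assumes "interval_domain lft rgt"
  shows "(\<forall>x\<in>maxD. directed_in maxD (maxle lft rgt) (wb_down maxD (maxle lft rgt) x) \<and>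
                   is_sup_in maxD (maxle lft rgt) (wb_down maxD (maxle lft rgt) x) x)
       \<and> (\<forall>a\<in>maxD. \<forall>b\<in>maxD. way_below_in maxD (maxle lft rgt) a b \<longleftrightarrow>
             (\<forall>S i. filtered_in maxD (maxle lft rgt) S \<and> is_inf_in maxD (maxle lft rgt) S i
                    \<and> maxle lft rgt i a \<longrightarrow> (\<exists>s\<in>S. maxle lft rgt s b)))
       \<and> (\<forall>x\<in>maxD. filtered_in maxD (maxle lft rgt) (wb_up maxD (maxle lft rgt) x) \<and>
                   is_inf_in maxD (maxle lft rgt) (wb_up maxD (maxle lft rgt) x) x)
       \<and> bicontinuous_poset maxD (maxle lft rgt)"
proof -
  interpret interval_dom lft rgt by (rule interval_dom.intro) (rule assms)
  have down: "\<forall>x\<in>maxD. directed_in maxD (\<preceq>) (wb_down maxD (\<preceq>) x) \<and>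
      is_sup_in maxD (\<preceq>) (wb_down maxD (\<preceq>) x) x"
    using wb_down_maxle_directed_sup by blast
  have interpolation: "\<forall>a\<in>maxD. \<forall>b\<in>maxD. way_below_in maxD (\<preceq>) a b \<longleftrightarrow>
      (\<forall>S i. filtered_in maxD (\<preceq>) S \<and> is_inf_in maxD (\<preceq>) S i \<and> i \<preceq> a \<longrightarrow> (\<exists>s\<in>S. s \<preceq> b))"
    using way_below_maxle_iff by blast
  have up: "\<forall>x\<in>maxD. filtered_in maxD (\<preceq>) (wb_up maxD (\<preceq>) x) \<and>
      is_inf_in maxD (\<preceq>) (wb_up maxD (\<preceq>) x) x"
    using wb_up_maxle_filtered_inf by blast
  show ?thesis using down interpolation up bicontinuous_posetI[OF poset_on_maxle down interpolation up]
    by blast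
qed

end
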